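(* Fix $k\geqslant 2$. Suppose that for every $k$-player projection game $G'$ that is loosely-connected and satisfies $\mathbf{val}(G')<1$ there is a constant $c_{G'}>0$ with $\mathbf{val}(G'^{\otimes n})\leqslant \exp(-c_{G'} n)$ for all $n\geqslant 1$. Then for every $k$-player projection game $G$ with $\mathbf{val}(G)<1$ there is a constant $c_G>0$ with $\mathbf{val}(G^{\otimes n})\leqslant \exp(-c_G n)$ for all $n\geqslant 1$.
   Context: A $k$-player game $G$ consists of finite question sets $\mathcal{X}_1,\dots,\mathcal{X}_k$, finite answer sets $\mathcal{A}_1,\dots,\mathcal{A}_k$, a probability distribution $\mu$ on $\mathcal{X}_1\times\cdots\times\mathcal{X}_k$, and a predicate $V$ on (question tuple, answer tuple). The verifier samples $(x^1,\dots,x^k)\sim\mu$, sends $x^i$ to player $i$, player $i$ answers $\alpha^i(x^i)\in\mathcal{A}_i$ for some function $\alpha^i$ (no communication), and accepts iff $V$ holds; $\mathbf{val}(G)$ is the maximum acceptance probability over strategies. $G^{\otimes n}$ is the game with question sets $\mathcal{X}_i^n$, answer sets $\mathcal{A}_i^n$, in which $n$ question tuples are drawn independently from $\mu$ (player $i$ receiving the $n$ $i$-th coordinates) and the verifier accepts iff $V$ holds in every coordinate. $G$ is a projection game if for every question tuple $q$ there exist $D_q\geqslant1$ and maps $\sigma^i_q:\mathcal{A}_i\to[D_q]$ with $V(q,(a^1,\dots,a^k))=1$ iff $\sigma^i_q(a^i)=\sigma^{i'}_q(a^{i'})$ for all $i\neq i'$. $G$ is loosely-connected if there do not exist partitions $\mathcal{X}_i=\mathcal{X}'_i\sqcup\mathcal{X}''_i$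 ($i\in[k]$) such that $\mathsf{supp}(\mu)\subseteq(\mathcal{X}'_1\times\cdots\times\mathcal{X}'_k)\cup(\mathcal{X}''_1\times\cdots\times\mathcal{X}''_k)$ and $\mathsf{supp}(\mu)$ intersects both of these products. *)

theory Defs
  imports "HOL-Probability.Probability"
begin

text \<open>A k-player game. Players are indexed by 0..<k. A question tuple is a list
of length k of questions, an answer tuple a list of length k of answers.\<close>

record ('q, 'a) game =
  qset :: "nat \<Rightarrow> 'q set"
  aset :: "nat \<Rightarrow> 'a set"
  qdist :: "'q list pmf"
  verif :: "'q list \<Rightarrow> 'a list \<Rightarrow> bool"

definition qtuples :: "nat \<Rightarrow> ('q, 'a) game \<Rightarrow> 'q list set" where
  "qtuples k G = {q. length q = k \<and> (\<forall>i<k. q ! i \<in> qset G i)}"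

definition atuples :: "nat \<Rightarrow> ('q, 'a) game \<Rightarrow> 'a list set" where
  "atuples k G = {a. length a = k \<and> (\<forall>i<k. a ! i \<in> aset G i)}"

definition is_game :: "nat \<Rightarrow> ('q, 'a) game \<Rightarrow> bool" where
  "is_game k G \<longleftrightarrow>
     (\<forall>i<k. finite (qset G i) \<and> finite (aset G i) \<and> aset G i \<noteq> {}) \<and>
     set_pmf (qdist G) \<subseteq> qtuples k G"

definition strategy :: "nat \<Rightarrow> ('q, 'a) game \<Rightarrow> (nat \<Rightarrow> 'q \<Rightarrow> 'a) \<Rightarrow> bool" where
  "strategy k G \<alpha> \<longleftrightarrow> (\<forall>i<k. \<forall>x\<in>qset G i. \<alpha> i x \<in> aset G i)"

definition win_prob :: "nat \<Rightarrow> ('q, 'a) game \<Rightarrow> (nat \<Rightarrow> 'q \<Rightarrow> 'a) \<Rightarrow> real" where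
  "win_prob k G \<alpha> = measure_pmf.prob (qdist G)
      {q. verif G q (map (\<lambda>i. \<alpha> i (q ! i)) [0..<k])}"

definition val :: "nat \<Rightarrow> ('q, 'a) game \<Rightarrow> real" where
  "val k G = Sup {win_prob k G \<alpha> | \<alpha>. strategy k G \<alpha>}"

definition projection_game :: "nat \<Rightarrow> ('q, 'a) game \<Rightarrow> bool" where
  "projection_game k G \<longleftrightarrow>
     (\<forall>q\<in>qtuples k G. \<exists>(D::nat) (\<sigma>::nat \<Rightarrow> 'a \<Rightarrow> nat). D \<ge> 1 \<and>
        (\<forall>i<k. \<forall>a\<in>aset G i. \<sigma> i a \<in> {1..D}) \<and>
        (\<forall>a\<in>atuples k G. verif G q a \<longleftrightarrow>
            (\<forall>i<k. \<forall>i'<k. i \<noteq> i' \<longrightarrow> \<sigma> i (a ! i) = \<sigma> i' (a ! i'))))"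

definition loosely_connected :: "nat \<Rightarrow> ('q, 'a) game \<Rightarrow> bool" where
  "loosely_connected k G \<longleftrightarrow>
     \<not> (\<exists>P :: nat \<Rightarrow> 'q set.
          (\<forall>i<k. P i \<subseteq> qset G i) \<and>
          (\<forall>q\<in>set_pmf (qdist G). (\<forall>i<k. q ! i \<in> P i) \<or> (\<forall>i<k. q ! i \<in> qset G i - P i)) \<and>
          (\<exists>q\<in>set_pmf (qdist G). \<forall>i<k. q ! i \<in> P i) \<and>
          (\<exists>q\<in>set_pmf (qdist G). \<forall>i<k. q ! i \<in> qset G i - P i))"

text \<open>n-fold parallel repetition. Player i's question/answer is a list of length n.
Question tuple Q (length k) has Q ! i ! j = i-th coordinate of the j-th round.\<close>
definition tensor :: "nat \<Rightarrow> nat \<Rightarrow> ('q, 'a) game \<Rightarrow> ('q list, 'a list) game" where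
  "tensor k n G = \<lparr>
     qset = (\<lambda>i. {xs. length xs = n \<and> set xs \<subseteq> qset G i}),
     aset = (\<lambda>i. {as. length as = n \<and> set as \<subseteq> aset G i}),
     qdist = map_pmf (\<lambda>qs. map (\<lambda>i. map (\<lambda>q. q ! i) qs) [0..<k]) (replicate_pmf n (qdist G)),
     verif = (\<lambda>Q A. \<forall>j<n. verif G (map (\<lambda>i. Q ! i ! j) [0..<k]) (map (\<lambda>i. A ! i ! j) [0..<k])) \<rparr>"

end

(*
  Induction on the size of the support of the question distribution mu.  If G is not
  loosely connected, there are sets P_i such that every question tuple in the support lies
  either in the box A of tuples with all coordinates in the P_i or in the box of tuples with
  all coordinates outside them, each with positive probability (p and 1 - p).  Answering
  with a strategy for G conditioned on A on questions in P_i, and with one for G conditioned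
  on -A otherwise, gives p val(G|A) + (1 - p) val(G|-A) <= val(G) < 1, so one of the two
  conditioned games, say G|A, has value < 1; its support is smaller, so by induction
  val((G|A)^m) <= e^m with e < 1.

  In G^n every round independently comes from mu|A with probability p and from mu|-A
  otherwise.  Once it is fixed which T rounds come from mu|A and what the questions of the
  other rounds are, a strategy for G^n restricts to a strategy for (G|A)^T on those T rounds.
  Hence val(G^n) <= E[e^T] = (p e + 1 - p)^n.
*)
theory Submission
  imports Defs
begin

section \<open>Interleaving lists\<close>

fun interleave :: "bool list \<Rightarrow> 'x list \<Rightarrow> 'x list \<Rightarrow> 'x list" where
  "interleave [] xs ys = []"
| "interleave (b # bs) xs ys =
     (if b then hd xs # interleave bs (tl xs) ys else hd ys # interleave bs xs (tl ys))"

definition select :: "bool \<Rightarrow> bool list \<Rightarrow> 'x list \<Rightarrow> 'x list" where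
  "select b bs zs = map snd (filter (\<lambda>p. fst p = b) (zip bs zs))"

lemma select_Nil [simp]: "select b [] zs = []"
  by (simp add: select_def)

lemma select_Nil2 [simp]: "select b bs [] = []"
  by (simp add: select_def)

lemma select_Cons_Cons [simp]:
  "select b (c # bs) (z # zs) = (if c = b then z # select b bs zs else select b bs zs)"
  by (simp add: select_def)

lemma length_interleave [simp]: "length (interleave bs xs ys) = length bs"
  by (induction bs arbitrary: xs ys) auto

lemma map_interleave:
  "length xs = count_list bs True \<Longrightarrow> length ys = count_list bs False \<Longrightarrow>
   map f (interleave bs xs ys) = interleave bs (map f xs) (map f ys)"
  by (induction bs arbitrary: xs ys) (auto simp: length_Suc_conv)

lemma set_interleave_subset:
  "length xs = count_list bs True \<Longrightarrow> length ys = count_list bs False \<Longrightarrow>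
   set (interleave bs xs ys) \<subseteq> set xs \<union> set ys"
proof (induction bs arbitrary: xs ys)
  case (Cons b bs)
  then show ?case by (cases b) (fastforce simp: length_Suc_conv)+
qed simp

lemma select_True_interleave:
  "length xs = count_list bs True \<Longrightarrow> select True bs (interleave bs xs ys) = xs"
  by (induction bs arbitrary: xs ys) (auto simp: length_Suc_conv)

lemma length_select: "length zs = length bs \<Longrightarrow> length (select b bs zs) = count_list bs b"
  by (induction bs arbitrary: zs) (auto simp: length_Suc_conv)

lemma set_select_subset: "set (select b bs zs) \<subseteq> set zs"
  by (auto simp: select_def dest: set_zip_rightD)

lemma list_all2_select:
  "list_all2 R us vs \<Longrightarrow> list_all2 R (select b bs us) (select b bs vs)"
proof (induction us vs arbitrary: bs rule: list_all2_induct)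
  case (Cons u us v vs)
  then show ?case by (cases bs) auto
qed simp

definition rounds :: "nat \<Rightarrow> (nat \<Rightarrow> 'a list) \<Rightarrow> nat \<Rightarrow> 'a list list" where
  "rounds k a n = map (\<lambda>j. map (\<lambda>i. a i ! j) [0..<k]) [0..<n]"

lemma length_rounds [simp]: "length (rounds k a n) = n"
  by (simp add: rounds_def)

lemma rounds_cong: "(\<And>i. i < k \<Longrightarrow> a i = a' i) \<Longrightarrow> rounds k a n = rounds k a' n"
  by (simp add: rounds_def)

lemma rounds_Suc:
  assumes "\<And>i. i < k \<Longrightarrow> a i \<noteq> []"
  shows "rounds k a (Suc n) = map (\<lambda>i. hd (a i)) [0..<k] # rounds k (\<lambda>i. tl (a i)) n"
proof -
  have "a i ! 0 = hd (a i)" "a i ! Suc j = tl (a i) ! j" if "i < k" for i j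
    using assms[OF that] by (cases "a i"; simp)+
  then show ?thesis
    unfolding rounds_def upt_conv_Cons[OF zero_less_Suc] map_Suc_upt[symmetric] by simp
qed

lemma select_rounds:
  "(\<And>i. i < k \<Longrightarrow> length (a i) = length bs) \<Longrightarrow>
   select b bs (rounds k a (length bs)) = rounds k (\<lambda>i. select b bs (a i)) (count_list bs b)"
proof (induction bs arbitrary: a)
  case (Cons c bs)
  have ne: "a i \<noteq> []" if "i < k" for i
    using Cons.prems[OF that] by auto
  then have a: "a i = hd (a i) # tl (a i)" if "i < k" for i
    using that by simp
  have IH: "select b bs (rounds k (\<lambda>i. tl (a i)) (length bs))
      = rounds k (\<lambda>i. select b bs (tl (a i))) (count_list bs b)"
    using Cons by simp
  have "select b (c # bs) (rounds k a (length (c # bs)))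
      = (if c = b
         then map (\<lambda>i. hd (a i)) [0..<k] # select b bs (rounds k (\<lambda>i. tl (a i)) (length bs))
         else select b bs (rounds k (\<lambda>i. tl (a i)) (length bs)))"
    by (simp add: rounds_Suc[OF ne])
  also have "\<dots> = rounds k (\<lambda>i. select b (c # bs) (hd (a i) # tl (a i))) (count_list (c # bs) b)"
    unfolding IH by (cases "c = b") (simp_all add: rounds_Suc)
  also have "\<dots> = rounds k (\<lambda>i. select b (c # bs) (a i)) (count_list (c # bs) b)"
    using a by (intro rounds_cong) auto
  finally show ?case .
qed (simp add: rounds_def)

section \<open>Repeating a mixture of distributions\<close>

lemma measure_pmf_Compl:
  fixes M :: "'x pmf"
  shows "measure M (- A) = 1 - measure M A"
  using measure_pmf.prob_compl[of A M] by (simp add: Compl_eq_Diff_UNIV)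

lemma pmf_eq_cond_mixture:
  fixes \<mu> :: "'x pmf"
  assumes "0 < measure \<mu> A" "measure \<mu> A < 1"
  shows "\<mu> = bind_pmf (bernoulli_pmf (measure \<mu> A))
                 (\<lambda>b. if b then cond_pmf \<mu> A else cond_pmf \<mu> (- A))"
proof -
  have "set_pmf \<mu> \<inter> A \<noteq> {}" "set_pmf \<mu> \<inter> - A \<noteq> {}"
    using assms by (auto simp: measure_pmf_zero_iff[symmetric] measure_pmf_Compl)
  with assms show ?thesis
    by (intro pmf_eqI) (simp add: pmf_bind pmf_cond measure_pmf_Compl)
qed

lemma measure_pmf_cong_support:
  "(\<And>x. x \<in> set_pmf M \<Longrightarrow> x \<in> A \<longleftrightarrow> x \<in> B) \<Longrightarrow> measure M A = measure M B"
  by (intro measure_prob_cong_0) (auto simp: set_pmf_iff)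

lemma measure_cond_pmf:
  "set_pmf \<mu> \<inter> A \<noteq> {} \<Longrightarrow> measure (cond_pmf \<mu> A) X = measure \<mu> (A \<inter> X) / measure \<mu> A"
  by (simp add: cond_pmf.rep_eq emeasure_measure_pmf_not_zero)

fun sequence_pmf :: "'x pmf list \<Rightarrow> 'x list pmf" where
  "sequence_pmf [] = return_pmf []"
| "sequence_pmf (M # Ms) = bind_pmf M (\<lambda>x. map_pmf (Cons x) (sequence_pmf Ms))"

lemma replicate_pmf_bind:
  "replicate_pmf n (bind_pmf B \<nu>) = bind_pmf (replicate_pmf n B) (\<lambda>bs. sequence_pmf (map \<nu> bs))"
proof (induction n)
  case (Suc n)
  show ?case
    by (simp add: Suc bind_assoc_pmf bind_return_pmf map_pmf_def[symmetric] map_bind_pmf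
        bind_map_pmf bind_commute_pmf[of "\<nu> _"])
qed (simp add: bind_return_pmf)

lemma sequence_pmf_interleave:
  "sequence_pmf (map (\<lambda>b. if b then M1 else M2) bs) =
     bind_pmf (replicate_pmf (count_list bs False) M2)
       (\<lambda>ys. map_pmf (\<lambda>xs. interleave bs xs ys) (replicate_pmf (count_list bs True) M1))"
proof (induction bs)
  case (Cons b bs)
  show ?case
  proof (cases b)
    case True
    then show ?thesis
      by (simp add: Cons bind_assoc_pmf bind_return_pmf map_pmf_def[symmetric] map_bind_pmf
          bind_map_pmf map_pmf_comp bind_commute_pmf[of M1])
  next
    case False
    then show ?thesis
      by (simp add: Cons bind_assoc_pmf bind_return_pmf map_pmf_def[symmetric] map_bind_pmf
          bind_map_pmf map_pmf_comp)
  qed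
qed (simp add: bind_return_pmf)

lemma nn_integral_power_count_replicate_bernoulli:
  assumes "0 \<le> p" "p \<le> 1" "0 \<le> e"
  shows "(\<integral>\<^sup>+bs. ennreal (e ^ count_list bs True) \<partial>replicate_pmf n (bernoulli_pmf p))
       = ennreal ((p * e + (1 - p)) ^ n)"
proof (induction n)
  case (Suc n)
  have "(\<integral>\<^sup>+bs. ennreal (e ^ count_list bs True) \<partial>replicate_pmf (Suc n) (bernoulli_pmf p))
      = (\<integral>\<^sup>+b. ennreal (if b then e else 1) * ennreal ((p * e + (1 - p)) ^ n) \<partial>bernoulli_pmf p)"
    using assms
    by (simp add: bind_return_pmf Suc.IH[symmetric] nn_integral_cmult[symmetric]
        ennreal_mult'[symmetric] cong: if_cong)
  also have "\<dots> = ennreal (e * (p * e + (1 - p)) ^ n * p + (p * e + (1 - p)) ^ n * (1 - p))"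
    using assms by (simp add: ennreal_mult'[symmetric] flip: ennreal_plus)
  also have "\<dots> = ennreal ((p * e + (1 - p)) ^ Suc n)"
    by (simp add: algebra_simps)
  finally show ?case .
qed simp

lemma measure_replicate_mixture_le:
  fixes M1 M2 :: "'x pmf" and W :: "'x list set"
  assumes p: "0 \<le> p" "p \<le> 1" and e: "0 \<le> e"
    and bound: "\<And>bs ys. length bs = n \<Longrightarrow> length ys = count_list bs False \<Longrightarrow>
        set ys \<subseteq> set_pmf M2 \<Longrightarrow>
        measure (map_pmf (\<lambda>xs. interleave bs xs ys) (replicate_pmf (count_list bs True) M1)) W
          \<le> e ^ count_list bs True"
  shows "measure (replicate_pmf n (bind_pmf (bernoulli_pmf p) (\<lambda>b. if b then M1 else M2))) W
           \<le> (p * e + (1 - p)) ^ n"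
proof -
  let ?inner = "\<lambda>bs ys. map_pmf (\<lambda>xs. interleave bs xs ys) (replicate_pmf (count_list bs True) M1)"
  have "emeasure (replicate_pmf n (bind_pmf (bernoulli_pmf p) (\<lambda>b. if b then M1 else M2))) W
      = (\<integral>\<^sup>+bs. \<integral>\<^sup>+ys. emeasure (?inner bs ys) W
           \<partial>replicate_pmf (count_list bs False) M2 \<partial>replicate_pmf n (bernoulli_pmf p))"
    unfolding replicate_pmf_bind sequence_pmf_interleave emeasure_bind_pmf ..
  also have "\<dots> \<le> (\<integral>\<^sup>+bs. \<integral>\<^sup>+ys. ennreal (e ^ count_list bs True)
           \<partial>replicate_pmf (count_list bs False) M2 \<partial>replicate_pmf n (bernoulli_pmf p))"
  proof (intro nn_integral_mono_AE AE_pmfI)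
    fix bs ys
    assume "bs \<in> set_pmf (replicate_pmf n (bernoulli_pmf p))"
      and "ys \<in> set_pmf (replicate_pmf (count_list bs False) M2)"
    then show "emeasure (?inner bs ys) W \<le> ennreal (e ^ count_list bs True)"
      using bound[of bs ys]
      by (auto simp: set_replicate_pmf measure_pmf.emeasure_eq_measure subset_iff intro!: ennreal_leI)
  qed
  also have "\<dots> = ennreal ((p * e + (1 - p)) ^ n)"
    using p e by (simp add: measure_pmf.emeasure_space_1 nn_integral_power_count_replicate_bernoulli)
  finally show ?thesis
    using p e by (simp add: measure_pmf.emeasure_eq_measure)
qed

section \<open>Parallel repetition restricted to a subset of rounds\<close>

lemma win_prob_le_val: "strategy k G \<alpha> \<Longrightarrow> win_prob k G \<alpha> \<le> val k G"
  unfolding val_def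
  by (rule cSup_upper) (auto intro!: bdd_aboveI[of _ 1] simp: win_prob_def)

lemma val_le:
  assumes "\<And>i. i < k \<Longrightarrow> aset G i \<noteq> {}"
    and "\<And>\<alpha>. strategy k G \<alpha> \<Longrightarrow> win_prob k G \<alpha> \<le> b"
  shows "val k G \<le> b"
proof -
  have "strategy k G (\<lambda>i x. SOME a. a \<in> aset G i)"
    using assms(1) by (auto simp: strategy_def some_in_eq)
  then show ?thesis
    unfolding val_def using assms(2) by (intro cSup_least) auto
qed

lemma val_le_1: "(\<And>i. i < k \<Longrightarrow> aset G i \<noteq> {}) \<Longrightarrow> val k G \<le> 1"
  by (rule val_le) (auto simp: win_prob_def)

lemma aset_tensor_nonempty:
  assumes "aset G i \<noteq> {}"
  shows "aset (tensor k n G) i \<noteq> {}"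
proof -
  obtain a where "a \<in> aset G i"
    using assms by blast
  then have "replicate n a \<in> aset (tensor k n G) i"
    by (auto simp: tensor_def)
  then show ?thesis
    by blast
qed

abbreviation column :: "nat \<Rightarrow> 'x list list \<Rightarrow> 'x list" where
  "column i qs \<equiv> map (\<lambda>q. q ! i) qs"

definition wins_all_rounds ::
  "nat \<Rightarrow> ('q, 'a) game \<Rightarrow> (nat \<Rightarrow> 'q list \<Rightarrow> 'a list) \<Rightarrow> 'q list list \<Rightarrow> bool" where
  "wins_all_rounds k G \<alpha> qs \<longleftrightarrow>
     list_all2 (verif G) qs (rounds k (\<lambda>i. \<alpha> i (column i qs)) (length qs))"

lemma win_prob_tensor:
  assumes "set_pmf (qdist G) \<subseteq> qtuples k G"
  shows "win_prob k (tensor k n G) \<alpha>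
           = measure (replicate_pmf n (qdist G)) {qs. wins_all_rounds k G \<alpha> qs}"
proof -
  have transpose: "map (\<lambda>i. map (\<lambda>i. column i qs) [0..<k] ! i ! j) [0..<k] = qs ! j"
    and answers: "map (\<lambda>i. map (\<lambda>i. \<alpha> i (map (\<lambda>i. column i qs) [0..<k] ! i)) [0..<k] ! i ! j) [0..<k]
       = rounds k (\<lambda>i. \<alpha> i (column i qs)) (length qs) ! j"
    if "\<forall>q\<in>set qs. length q = k" "j < length qs" for qs j
    using that by (auto intro!: nth_equalityI simp: rounds_def)
  show ?thesis
    unfolding win_prob_def using assms
    by (simp add: tensor_def, intro measure_pmf_cong_support)
      (auto simp: set_replicate_pmf qtuples_def subset_iff transpose answers
        wins_all_rounds_def list_all2_conv_all_nth)
qed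

lemma column_in_qset_tensor:
  "set qs \<subseteq> qtuples k G \<Longrightarrow> i < k \<Longrightarrow> column i qs \<in> qset (tensor k (length qs) G) i"
  by (auto simp: tensor_def qtuples_def)

lemma strategy_tensor_restrict:
  assumes \<alpha>: "strategy k (tensor k (length bs) G) \<alpha>"
    and ys: "length ys = count_list bs False" "set ys \<subseteq> qtuples k G"
  shows "strategy k (tensor k (count_list bs True) G)
           (\<lambda>i zs. select True bs (\<alpha> i (interleave bs zs (column i ys))))"
  unfolding strategy_def
proof (intro allI impI ballI)
  fix i zs assume i: "i < k" and zs: "zs \<in> qset (tensor k (count_list bs True) G) i"
  have "set (column i ys) \<subseteq> qset G i"
    using ys(2) i by (auto simp: qtuples_def)
  moreover have "length zs = count_list bs True" "set zs \<subseteq> qset G i"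
    using zs by (auto simp: tensor_def)
  moreover have "set (interleave bs zs (column i ys)) \<subseteq> set zs \<union> set (column i ys)"
    using ys(1) zs by (intro set_interleave_subset) (auto simp: tensor_def)
  ultimately have "set (interleave bs zs (column i ys)) \<subseteq> qset G i"
    by blast
  then have "interleave bs zs (column i ys) \<in> qset (tensor k (length bs) G) i"
    by (simp add: tensor_def)
  then have "\<alpha> i (interleave bs zs (column i ys)) \<in> aset (tensor k (length bs) G) i"
    using \<alpha> i by (simp add: strategy_def)
  then show "select True bs (\<alpha> i (interleave bs zs (column i ys)))
      \<in> aset (tensor k (count_list bs True) G) i"
    using set_select_subset by (fastforce simp: tensor_def length_select)
qed

lemma wins_all_rounds_restrict:
  assumes \<alpha>: "strategy k (tensor k (length bs) G) \<alpha>"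
    and xs: "length xs = count_list bs True" "set xs \<subseteq> qtuples k G"
    and ys: "length ys = count_list bs False" "set ys \<subseteq> qtuples k G"
    and wins: "wins_all_rounds k G \<alpha> (interleave bs xs ys)"
  shows "wins_all_rounds k G (\<lambda>i zs. select True bs (\<alpha> i (interleave bs zs (column i ys)))) xs"
proof -
  define a where "a = (\<lambda>i. \<alpha> i (column i (interleave bs xs ys)))"
  have column_interleave:
    "column i (interleave bs xs ys) = interleave bs (column i xs) (column i ys)" for i
    using xs ys by (simp add: map_interleave)
  have "length (a i) = length bs" if "i < k" for i
  proof -
    have "set (interleave bs xs ys) \<subseteq> qtuples k G"
      using xs ys set_interleave_subset[of xs bs ys] by auto
    then have "a i \<in> aset (tensor k (length bs) G) i"
      using \<alpha> that column_in_qset_tensor[of "interleave bs xs ys" k G i]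
      by (auto simp: a_def strategy_def)
    then show ?thesis
      by (simp add: tensor_def)
  qed
  moreover have "list_all2 (verif G) (select True bs (interleave bs xs ys))
      (select True bs (rounds k a (length bs)))"
    using wins by (intro list_all2_select) (simp add: wins_all_rounds_def a_def)
  ultimately show ?thesis
    using xs
    by (simp add: wins_all_rounds_def select_rounds select_True_interleave a_def column_interleave)
qed

section \<open>Conditioning a game\<close>

definition cond_game :: "('q, 'a) game \<Rightarrow> 'q list set \<Rightarrow> ('q, 'a) game" where
  "cond_game G A = G\<lparr>qdist := cond_pmf (qdist G) A\<rparr>"

lemma cond_game_simps [simp]:
  "qset (cond_game G A) = qset G" "aset (cond_game G A) = aset G" "verif (cond_game G A) = verif G"
  "qdist (cond_game G A) = cond_pmf (qdist G) A"
  by (simp_all add: cond_game_def)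

lemma qtuples_cond_game [simp]: "qtuples k (cond_game G A) = qtuples k G"
  by (simp add: qtuples_def)

lemma strategy_tensor_cond_game [simp]:
  "strategy k (tensor k n (cond_game G A)) = strategy k (tensor k n G)"
  by (simp add: fun_eq_iff strategy_def tensor_def)

lemma wins_all_rounds_cond_game [simp]: "wins_all_rounds k (cond_game G A) = wins_all_rounds k G"
  by (simp add: wins_all_rounds_def fun_eq_iff)

lemma is_game_cond_game:
  "is_game k G \<Longrightarrow> set_pmf (qdist G) \<inter> A \<noteq> {} \<Longrightarrow> is_game k (cond_game G A)"
  by (auto simp: is_game_def)

lemma projection_game_cond_game: "projection_game k G \<Longrightarrow> projection_game k (cond_game G A)"
  by (simp add: projection_game_def atuples_def)

lemma val_tensor_le_of_cond_game:
  fixes G :: "('q, 'a) game" and A :: "'q list set"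
  defines "p \<equiv> measure (qdist G) A"
  assumes game: "is_game k G" and p: "0 < p" "p < 1" and e: "0 \<le> e"
    and decay: "\<And>m. val k (tensor k m (cond_game G A)) \<le> e ^ m"
  shows "val k (tensor k n G) \<le> (p * e + (1 - p)) ^ n"
proof (rule val_le)
  show "aset (tensor k n G) i \<noteq> {}" if "i < k" for i
    using game that by (simp add: is_game_def aset_tensor_nonempty)
next
  fix \<alpha> assume \<alpha>: "strategy k (tensor k n G) \<alpha>"
  let ?W = "{qs. wins_all_rounds k G \<alpha> qs}"
  have supp: "set_pmf (qdist G) \<subseteq> qtuples k G"
    using game by (simp add: is_game_def)
  have ne: "set_pmf (qdist G) \<inter> A \<noteq> {}" "set_pmf (qdist G) \<inter> - A \<noteq> {}"
    using p by (auto simp: measure_pmf_zero_iff[symmetric] measure_pmf_Compl p_def)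
  have "win_prob k (tensor k n G) \<alpha> = measure (replicate_pmf n (qdist G)) ?W"
    using supp by (rule win_prob_tensor)
  also have "\<dots> = measure (replicate_pmf n (bind_pmf (bernoulli_pmf p)
      (\<lambda>b. if b then cond_pmf (qdist G) A else cond_pmf (qdist G) (- A)))) ?W"
    using p unfolding p_def by (subst pmf_eq_cond_mixture) auto
  also have "\<dots> \<le> (p * e + (1 - p)) ^ n"
  proof (rule measure_replicate_mixture_le)
    fix bs ys assume bs: "length bs = n"
      and ys: "length ys = count_list bs False" "set ys \<subseteq> set_pmf (cond_pmf (qdist G) (- A))"
    define \<beta> where "\<beta> = (\<lambda>i zs. select True bs (\<alpha> i (interleave bs zs (column i ys))))"
    let ?T = "count_list bs True"
    have ys': "set ys \<subseteq> qtuples k G"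
      using ys(2) supp ne by auto
    have "measure (map_pmf (\<lambda>xs. interleave bs xs ys) (replicate_pmf ?T (cond_pmf (qdist G) A))) ?W
        \<le> measure (replicate_pmf ?T (cond_pmf (qdist G) A)) {xs. wins_all_rounds k G \<beta> xs}"
      using \<alpha> bs ys(1) ys' supp ne unfolding \<beta>_def
      by (simp, intro measure_pmf.finite_measure_mono_AE AE_pmfI)
        (auto simp: set_replicate_pmf intro!: wins_all_rounds_restrict)
    also have "\<dots> = win_prob k (tensor k ?T (cond_game G A)) \<beta>"
      using win_prob_tensor[of "cond_game G A" k ?T \<beta>] supp ne(1)
      by (simp add: Int_absorb2 le_infI1)
    also have "\<dots> \<le> val k (tensor k ?T (cond_game G A))"
      using \<alpha> bs ys(1) ys' unfolding \<beta>_def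
      by (intro win_prob_le_val) (auto intro: strategy_tensor_restrict)
    also have "\<dots> \<le> e ^ ?T"
      by (rule decay)
    finally show "measure (map_pmf (\<lambda>xs. interleave bs xs ys)
        (replicate_pmf ?T (cond_pmf (qdist G) A))) ?W \<le> e ^ ?T" .
  qed (use p e in auto)
  finally show "win_prob k (tensor k n G) \<alpha> \<le> (p * e + (1 - p)) ^ n" .
qed

lemma win_prob_glued:
  fixes k :: nat and G :: "('q, 'a) game" and P :: "nat \<Rightarrow> 'q set"
  defines "A \<equiv> {q. \<forall>i<k. q ! i \<in> P i}"
  assumes split: "\<And>q. q \<in> set_pmf (qdist G) \<Longrightarrow> q \<in> A \<or> (\<forall>i<k. q ! i \<notin> P i)"
    and ne: "set_pmf (qdist G) \<inter> A \<noteq> {}" "set_pmf (qdist G) \<inter> - A \<noteq> {}"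
  shows "win_prob k G (\<lambda>i x. if x \<in> P i then \<alpha>1 i x else \<alpha>2 i x)
       = measure (qdist G) A * win_prob k (cond_game G A) \<alpha>1
         + measure (qdist G) (- A) * win_prob k (cond_game G (- A)) \<alpha>2"
proof -
  let ?W = "\<lambda>\<alpha>. {q. verif G q (map (\<lambda>i. \<alpha> i (q ! i)) [0..<k])}"
  let ?\<alpha> = "\<lambda>i x. if x \<in> P i then \<alpha>1 i x else \<alpha>2 i x"
  have answers1: "map (\<lambda>i. ?\<alpha> i (q ! i)) [0..<k] = map (\<lambda>i. \<alpha>1 i (q ! i)) [0..<k]"
    if "q \<in> A" for q
    using that by (intro map_cong) (auto simp: A_def)
  have answers2: "map (\<lambda>i. ?\<alpha> i (q ! i)) [0..<k] = map (\<lambda>i. \<alpha>2 i (q ! i)) [0..<k]"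
    if "\<forall>i<k. q ! i \<notin> P i" for q
    using that by (intro map_cong) auto
  have "win_prob k G ?\<alpha> = measure (qdist G) (A \<inter> ?W ?\<alpha>) + measure (qdist G) (- A \<inter> ?W ?\<alpha>)"
    unfolding win_prob_def
    by (subst measure_pmf.finite_measure_Union[symmetric])
      (auto intro!: arg_cong[where f = "measure _"])
  also have "A \<inter> ?W ?\<alpha> = A \<inter> ?W \<alpha>1"
    by (auto simp: answers1)
  also have "measure (qdist G) (- A \<inter> ?W ?\<alpha>) = measure (qdist G) (- A \<inter> ?W \<alpha>2)"
  proof (rule measure_pmf_cong_support)
    fix q assume "q \<in> set_pmf (qdist G)"
    then have "q \<notin> A \<Longrightarrow> \<forall>i<k. q ! i \<notin> P i"
      using split by blast
    then show "q \<in> - A \<inter> ?W ?\<alpha> \<longleftrightarrow> q \<in> - A \<inter> ?W \<alpha>2"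
      by (auto simp: answers2)
  qed
  finally show ?thesis
    using ne by (simp add: win_prob_def measure_cond_pmf measure_pmf_zero_iff)
qed

lemma val_cond_game_mixture_le:
  fixes k :: nat and G :: "('q, 'a) game" and P :: "nat \<Rightarrow> 'q set"
  defines "A \<equiv> {q. \<forall>i<k. q ! i \<in> P i}"
  assumes game: "is_game k G"
    and split: "\<And>q. q \<in> set_pmf (qdist G) \<Longrightarrow> q \<in> A \<or> (\<forall>i<k. q ! i \<notin> P i)"
    and pos: "0 < measure (qdist G) A" and less_1: "measure (qdist G) A < 1"
  shows "measure (qdist G) A * val k (cond_game G A)
         + (1 - measure (qdist G) A) * val k (cond_game G (- A)) \<le> val k G"
proof -
  define p where "p = measure (qdist G) A"
  have p: "0 < p" "p < 1"
    using pos less_1 by (simp_all add: p_def)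
  have ne: "set_pmf (qdist G) \<inter> A \<noteq> {}" "set_pmf (qdist G) \<inter> - A \<noteq> {}"
    using p by (auto simp: measure_pmf_zero_iff[symmetric] measure_pmf_Compl p_def)
  have aset: "\<And>i. i < k \<Longrightarrow> aset G i \<noteq> {}"
    using game by (simp add: is_game_def)
  have glued:
    "p * win_prob k (cond_game G A) \<alpha>1 + (1 - p) * win_prob k (cond_game G (- A)) \<alpha>2 \<le> val k G"
    if "strategy k G \<alpha>1" "strategy k G \<alpha>2" for \<alpha>1 \<alpha>2
  proof -
    have "strategy k G (\<lambda>i x. if x \<in> P i then \<alpha>1 i x else \<alpha>2 i x)"
      using that by (simp add: strategy_def)
    from win_prob_le_val[OF this] show ?thesis
      using split ne by (simp add: win_prob_glued A_def p_def measure_pmf_Compl)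
  qed
  have "p * val k (cond_game G A) + (1 - p) * win_prob k (cond_game G (- A)) \<alpha>2 \<le> val k G"
    if "strategy k G \<alpha>2" for \<alpha>2
  proof -
    have "val k (cond_game G A) \<le> (val k G - (1 - p) * win_prob k (cond_game G (- A)) \<alpha>2) / p"
      using aset glued[OF _ that] p by (intro val_le) (auto simp: strategy_def field_simps)
    then show ?thesis
      using p by (simp add: field_simps)
  qed
  then have "val k (cond_game G (- A)) \<le> (val k G - p * val k (cond_game G A)) / (1 - p)"
    using aset p by (intro val_le) (auto simp: strategy_def field_simps)
  then show ?thesis
    using p by (simp add: field_simps p_def)
qed

lemma not_loosely_connected_cond_game_val_less_1:
  fixes G :: "('q, 'a) game"
  assumes game: "is_game k G" and "0 < k" and val: "val k G < 1" and "\<not> loosely_connected k G"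
  obtains A where "0 < measure (qdist G) A" "measure (qdist G) A < 1" "val k (cond_game G A) < 1"
proof -
  obtain P where split: "\<forall>q\<in>set_pmf (qdist G).
      (\<forall>i<k. q ! i \<in> P i) \<or> (\<forall>i<k. q ! i \<in> qset G i - P i)"
    and inside: "\<exists>q\<in>set_pmf (qdist G). \<forall>i<k. q ! i \<in> P i"
    and outside: "\<exists>q\<in>set_pmf (qdist G). \<forall>i<k. q ! i \<in> qset G i - P i"
    using assms(4) unfolding loosely_connected_def by blast
  define A where "A = {q. \<forall>i<k. q ! i \<in> P i}"
  obtain q1 where "q1 \<in> set_pmf (qdist G)" "q1 \<in> A"
    using inside by (auto simp: A_def)
  then have pos: "0 < measure (qdist G) A"
    by (rule measure_pmf_posI)
  obtain q2 where q2: "q2 \<in> set_pmf (qdist G)" "\<forall>i<k. q2 ! i \<notin> P i"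
    using outside by blast
  then have "q2 \<in> - A"
    using \<open>0 < k\<close> by (auto simp: A_def)
  with q2(1) have "0 < measure (qdist G) (- A)"
    by (rule measure_pmf_posI)
  with pos have p: "0 < measure (qdist G) A" "measure (qdist G) A < 1"
    by (simp_all add: measure_pmf_Compl)
  have "\<forall>i<k. q ! i \<notin> P i" if "q \<in> set_pmf (qdist G)" "q \<notin> A" for q
    using split that by (auto simp: A_def)
  then have "measure (qdist G) A * val k (cond_game G A)
      + (1 - measure (qdist G) A) * val k (cond_game G (- A)) \<le> val k G"
    using p unfolding A_def by (intro val_cond_game_mixture_le[OF game]) (auto simp: A_def)
  then have "val k (cond_game G A) < 1 \<or> val k (cond_game G (- A)) < 1"
  proof (rule contrapos_pp)
    assume "\<not> (val k (cond_game G A) < 1 \<or> val k (cond_game G (- A)) < 1)"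
    then have "measure (qdist G) A * 1 \<le> measure (qdist G) A * val k (cond_game G A)"
      "(1 - measure (qdist G) A) * 1 \<le> (1 - measure (qdist G) A) * val k (cond_game G (- A))"
      using p by (intro mult_left_mono; simp)+
    then show "\<not> measure (qdist G) A * val k (cond_game G A)
        + (1 - measure (qdist G) A) * val k (cond_game G (- A)) \<le> val k G"
      using val by simp
  qed
  then show ?thesis
    using p that[of A] that[of "- A"] by (auto simp: measure_pmf_Compl)
qed

lemma finite_set_pmf_qdist: "is_game k G \<Longrightarrow> finite (set_pmf (qdist G))"
proof -
  assume game: "is_game k G"
  have "set_pmf (qdist G) \<subseteq> {xs. set xs \<subseteq> (\<Union>i<k. qset G i) \<and> length xs = k}"
    using game by (force simp: is_game_def qtuples_def in_set_conv_nth)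
  moreover have "finite {xs. set xs \<subseteq> (\<Union>i<k. qset G i) \<and> length xs = k}"
    using game by (intro finite_lists_length_eq) (auto simp: is_game_def)
  ultimately show ?thesis
    by (rule finite_subset)
qed

lemma card_set_pmf_cond_game_less:
  assumes "finite (set_pmf (qdist G))" "0 < measure (qdist G) A" "measure (qdist G) A < 1"
  shows "card (set_pmf (qdist (cond_game G A))) < card (set_pmf (qdist G))"
proof -
  have "set_pmf (qdist G) \<inter> A \<noteq> {}" "set_pmf (qdist G) \<inter> - A \<noteq> {}"
    using assms(2,3) by (auto simp: measure_pmf_zero_iff[symmetric] measure_pmf_Compl)
  then show ?thesis
    using assms(1) by (intro psubset_card_mono) auto
qed

definition decays_geometrically :: "nat \<Rightarrow> ('q, 'a) game \<Rightarrow> bool" where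
  "decays_geometrically k G \<longleftrightarrow> (\<exists>r. 0 < r \<and> r < 1 \<and> (\<forall>n\<ge>1. val k (tensor k n G) \<le> r ^ n))"

lemma decays_geometrically_iff:
  "decays_geometrically k G \<longleftrightarrow> (\<exists>c>0. \<forall>n\<ge>1. val k (tensor k n G) \<le> exp (- c * real n))"
proof
  assume "decays_geometrically k G"
  then obtain r where "0 < r" "r < 1" "\<forall>n\<ge>1. val k (tensor k n G) \<le> r ^ n"
    by (auto simp: decays_geometrically_def)
  moreover have "exp (- (- ln r) * real n) = r ^ n" for n
    using \<open>0 < r\<close> by (simp add: exp_of_nat_mult mult.commute)
  ultimately show "\<exists>c>0. \<forall>n\<ge>1. val k (tensor k n G) \<le> exp (- c * real n)"
    by (intro exI[of _ "- ln r"]) auto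
next
  assume "\<exists>c>0. \<forall>n\<ge>1. val k (tensor k n G) \<le> exp (- c * real n)"
  then obtain c where "c > 0" "\<forall>n\<ge>1. val k (tensor k n G) \<le> exp (- c * real n)"
    by blast
  moreover have "exp (- c * real n) = exp (- c) ^ n" for n
    by (simp add: exp_of_nat_mult[symmetric] mult.commute)
  ultimately show "decays_geometrically k G"
    unfolding decays_geometrically_def by (intro exI[of _ "exp (- c)"]) auto
qed

lemma decays_geometrically_of_cond_game:
  assumes game: "is_game k G" and p: "0 < measure (qdist G) A" "measure (qdist G) A < 1"
    and "decays_geometrically k (cond_game G A)"
  shows "decays_geometrically k G"
proof -
  define p where "p = measure (qdist G) A"
  obtain r where r: "0 < r" "r < 1"
    and decay: "\<forall>m\<ge>1. val k (tensor k m (cond_game G A)) \<le> r ^ m"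
    using assms(4) by (auto simp: decays_geometrically_def)
  have "val k (tensor k m (cond_game G A)) \<le> r ^ m" for m
  proof (cases "m = 0")
    case True
    then show ?thesis
      using game by (auto simp: is_game_def intro!: val_le_1 aset_tensor_nonempty)
  qed (use decay in auto)
  then have "val k (tensor k n G) \<le> (p * r + (1 - p)) ^ n" for n
    using game p r unfolding p_def by (intro val_tensor_le_of_cond_game) auto
  moreover have "0 < p * r" "p * r < p"
    using p r mult_strict_left_mono[of r 1 p] unfolding p_def by simp_all
  then have "0 < p * r + (1 - p)" "p * r + (1 - p) < 1"
    using p unfolding p_def by linarith+
  ultimately show ?thesis
    unfolding decays_geometrically_def by blast
qed

theorem lemma2p4:
  fixes k :: nat and G :: "('q, 'a) game"
  assumes k2: "k \<ge> 2"
    and hyp: "\<forall>G' :: ('q, 'a) game.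
        is_game k G' \<and> projection_game k G' \<and> loosely_connected k G' \<and> val k G' < 1 \<longrightarrow>
        (\<exists>c>0. \<forall>n\<ge>1. val k (tensor k n G') \<le> exp (- c * real n))"
    and G: "is_game k G" "projection_game k G" "val k G < 1"
  shows "\<exists>c>0. \<forall>n\<ge>1. val k (tensor k n G) \<le> exp (- c * real n)"
proof -
  have "decays_geometrically k H"
    if "is_game k H" "projection_game k H" "val k H < 1" for H :: "('q, 'a) game"
    using that
  proof (induction "card (set_pmf (qdist H))" arbitrary: H rule: less_induct)
    case less
    show ?case
    proof (cases "loosely_connected k H")
      case True
      then show ?thesis
        using hyp less.prems by (simp add: decays_geometrically_iff)
    next
      case False
      obtain A where A: "0 < measure (qdist H) A" "measure (qdist H) A < 1"
        "val k (cond_game H A) < 1"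
        using not_loosely_connected_cond_game_val_less_1[OF less.prems(1) _ less.prems(3) False] k2
        by auto
      have "set_pmf (qdist H) \<inter> A \<noteq> {}"
        using A(1) by (auto simp: measure_pmf_zero_iff[symmetric])
      moreover have "card (set_pmf (qdist (cond_game H A))) < card (set_pmf (qdist H))"
        using finite_set_pmf_qdist[OF less.prems(1)] A(1,2) by (rule card_set_pmf_cond_game_less)
      ultimately have "decays_geometrically k (cond_game H A)"
        using less.hyps less.prems A(3) is_game_cond_game projection_game_cond_game by blast
      then show ?thesis
        by (rule decays_geometrically_of_cond_game[OF less.prems(1) A(1,2)])
    qed
  qed
  then show ?thesis
    using G by (simp add: decays_geometrically_iff)
qed

end
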